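(* Let $\mathbb{K}$ be a field, $n>1$, $a=\sum_{j=0}^d c_j s^j\in\mathbb{K}[s]^n$ a non-zero row vector of degree $d$, and $A\in\mathbb{K}^{(2d+1)\times n(d+1)}$ the matrix whose $(i,\,kn+r)$ entry ($1\le i\le 2d+1$, $0\le k\le d$, $1\le r\le n$) is the $r$-th entry of $c_{i-1-k}$ (zero if $i-1-k\notin\{0,\dots,d\}$). With $\tilde q$ and $b_r$ as in the context, $\mathrm{syz}(a)=\langle b_r^\flat\mid r\in\tilde q\rangle_{\mathbb{K}[s]}$.
   Context: A column of a matrix is pivotal if it is either the first column and non-zero, or linearly independent of all previous columns; otherwise non-pivotal. $p$ is the set of pivotal indices of $A$, $q$ the set of non-pivotal indices, and $\tilde q=\{\min\varrho\mid\varrho\in q/(n)\}$ the set of basic non-pivotal indices (minimal elements of the classes of $q$ modulo $n$). For $i\in q$ write uniquely $A_{*i}=\sum_{\{j\in p\mid j<i\}}\alpha^{(i)}_jA_{*j}$ ($A_{*j}$ the $j$-th column) and set $b_i=e_i-\sum_{\{j\in p\mid j<i\}}\alpha^{(i)}_je_j\in\mathbb{K}^{n(d+1)}$, $e_i$ the standard basis vectors. For $v\in\mathbb{K}^{n(d+1)}$ in blocks $v=[w_0;\dots;w_d]$ with $w_i\in\mathbb{K}^n$, $v^\flat=\sum_{i=0}^d s^i w_i\in\mathbb{K}[s]^n$. $\mathrm{syz}(a)=\{h\in\mathbb{K}[s]^n\mid a\,h=0\}$. *)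

theory Defs
  imports "HOL-Computational_Algebra.Polynomial"
begin

text \<open>Conventions: a row vector in K[s]^n is a function nat => 'a poly whose entries
  at indices 0..n-1 are the components (indices are 0-based). Matrices are functions
  nat => nat => 'a (row, column), 0-based. Column index k*n + r (0 <= r < n) of the
  paper's matrix A (1-based: kn+r+1) corresponds to coefficient c_{i-k} of entry r.\<close>

definition vdegree :: "nat \<Rightarrow> (nat \<Rightarrow> 'a::zero poly) \<Rightarrow> nat" where
  "vdegree n a = Max ((\<lambda>r. degree (a r)) ` {..<n})"

text \<open>The matrix A (rows 0..2d, columns 0..n(d+1)-1); row i here is row i+1 of the paper.\<close>
definition coeff_mat :: "nat \<Rightarrow> nat \<Rightarrow> (nat \<Rightarrow> 'a::zero poly) \<Rightarrow> nat \<Rightarrow> nat \<Rightarrow> 'a" where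
  "coeff_mat n d a i m =
     (let k = m div n; r = m mod n in
      if k \<le> i \<and> i - k \<le> d then coeff (a r) (i - k) else 0)"

definition in_col_span :: "nat \<Rightarrow> (nat \<Rightarrow> nat \<Rightarrow> 'a::field) \<Rightarrow> nat set \<Rightarrow> nat \<Rightarrow> bool" where
  "in_col_span R M S j \<longleftrightarrow> (\<exists>\<beta>. \<forall>i<R. M i j = (\<Sum>l\<in>S. \<beta> l * M i l))"

text \<open>Pivotal column: linearly independent of all previous columns
  (for j = 0: nonzero, since the empty span is {0}).\<close>
definition pivotal :: "nat \<Rightarrow> (nat \<Rightarrow> nat \<Rightarrow> 'a::field) \<Rightarrow> nat \<Rightarrow> bool" where
  "pivotal R M j \<longleftrightarrow> \<not> in_col_span R M {..<j} j"

definition piv_set :: "nat \<Rightarrow> nat \<Rightarrow> (nat \<Rightarrow> nat \<Rightarrow> 'a::field) \<Rightarrow> nat set" where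
  "piv_set R N M = {j. j < N \<and> pivotal R M j}"

definition nonpiv_set :: "nat \<Rightarrow> nat \<Rightarrow> (nat \<Rightarrow> nat \<Rightarrow> 'a::field) \<Rightarrow> nat set" where
  "nonpiv_set R N M = {j. j < N \<and> \<not> pivotal R M j}"

definition basic_nonpiv :: "nat \<Rightarrow> nat set \<Rightarrow> nat set" where
  "basic_nonpiv n q = (\<lambda>i. Min {j \<in> q. j mod n = i mod n}) ` q"

definition alpha :: "nat \<Rightarrow> (nat \<Rightarrow> nat \<Rightarrow> 'a::field) \<Rightarrow> nat set \<Rightarrow> nat \<Rightarrow> nat \<Rightarrow> 'a" where
  "alpha R M p i = (THE \<beta>. (\<forall>i'<R. M i' i = (\<Sum>j\<in>{j\<in>p. j < i}. \<beta> j * M i' j))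
                        \<and> (\<forall>j. j \<notin> {j\<in>p. j < i} \<longrightarrow> \<beta> j = 0))"

definition bvec :: "nat \<Rightarrow> (nat \<Rightarrow> nat \<Rightarrow> 'a::field) \<Rightarrow> nat set \<Rightarrow> nat \<Rightarrow> nat \<Rightarrow> 'a" where
  "bvec R M p i = (\<lambda>m. (if m = i then 1 else 0)
                        - (\<Sum>j\<in>{j\<in>p. j < i}. alpha R M p i j * (if m = j then 1 else 0)))"

definition flat :: "nat \<Rightarrow> nat \<Rightarrow> (nat \<Rightarrow> 'a::comm_semiring_1) \<Rightarrow> nat \<Rightarrow> 'a poly" where
  "flat n d v = (\<lambda>r. if r < n then (\<Sum>k\<le>d. monom (v (k * n + r)) k) else 0)"

definition syz :: "nat \<Rightarrow> (nat \<Rightarrow> 'a::comm_ring_1 poly) \<Rightarrow> (nat \<Rightarrow> 'a poly) set" where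
  "syz n a = {h. (\<forall>r\<ge>n. h r = 0) \<and> (\<Sum>r<n. a r * h r) = 0}"

definition poly_span :: "'i set \<Rightarrow> ('i \<Rightarrow> nat \<Rightarrow> 'a::comm_ring_1 poly) \<Rightarrow> (nat \<Rightarrow> 'a poly) set" where
  "poly_span I g = {h. \<exists>f. h = (\<lambda>r. \<Sum>i\<in>I. f i * g i r)}"

end

theory Submission
  imports Defs
begin

text \<open>Multiplication by \<open>a\<close> sends the coefficient vector \<open>v\<close> of a polynomial vector of
  degree at most \<open>d\<close> to the coefficient vector \<open>A v\<close> of \<open>a v\<^sup>\<flat>\<close>, so the syzygies of
  degree at most \<open>d\<close> are the flats of the kernel of \<open>A\<close>. Every \<open>b\<^sub>i\<close> lies in this kernel,
  and the last nonzero coordinate of a kernel vector is a non-pivotal index \<open>B\<close>; writing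
  \<open>B = i + t n\<close> with \<open>i\<close> basic, a multiple of \<open>s\<^sup>t b\<^sub>i\<^sup>\<flat>\<close> cancels that coordinate, so every
  syzygy of degree at most \<open>d\<close> is reduced to zero. A general syzygy \<open>h\<close> is brought into
  degree at most \<open>d\<close> by subtracting multiples of the Koszul syzygies
  \<open>a\<^sub>t e\<^sub>i - a\<^sub>i e\<^sub>t\<close>, where \<open>a\<^sub>t\<close> has maximal degree: division by \<open>a\<^sub>t\<close> bounds the
  components other than \<open>h\<^sub>t\<close>, and then the relation \<open>a h = 0\<close> bounds \<open>h\<^sub>t\<close>.\<close>

lemma in_col_span_column:
  assumes "finite T" "l \<in> T"
  shows "in_col_span R M T l"
  unfolding in_col_span_def
  by (rule exI[of _ "\<lambda>k. of_bool (k = l)"]) (simp add: assms)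

lemma in_col_span_trans:
  assumes "finite S" and S: "\<forall>l\<in>S. in_col_span R M T l" and j: "in_col_span R M S j"
  shows "in_col_span R M T j"
proof -
  obtain \<gamma> where \<gamma>: "\<forall>l\<in>S. \<forall>m<R. M m l = (\<Sum>k\<in>T. \<gamma> l k * M m k)"
    using S unfolding in_col_span_def by (subst (asm) bchoice_iff) blast
  obtain \<beta> where \<beta>: "\<forall>m<R. M m j = (\<Sum>l\<in>S. \<beta> l * M m l)"
    using j unfolding in_col_span_def by blast
  show ?thesis
    unfolding in_col_span_def
  proof (intro exI[of _ "\<lambda>k. \<Sum>l\<in>S. \<beta> l * \<gamma> l k"] allI impI)
    fix m assume "m < R"
    then have "M m j = (\<Sum>l\<in>S. \<beta> l * (\<Sum>k\<in>T. \<gamma> l k * M m k))"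
      using \<beta> \<gamma> by simp
    also have "\<dots> = (\<Sum>k\<in>T. (\<Sum>l\<in>S. \<beta> l * \<gamma> l k) * M m k)"
      by (simp add: sum_distrib_left sum_distrib_right mult.assoc sum.swap[of _ S])
    finally show "M m j = (\<Sum>k\<in>T. (\<Sum>l\<in>S. \<beta> l * \<gamma> l k) * M m k)" .
  qed
qed

lemma nonpivotal_in_col_span_pivotal:
  "\<not> pivotal R M i \<Longrightarrow> in_col_span R M {j. pivotal R M j \<and> j < i} i"
proof (induction i rule: less_induct)
  case (less i)
  have fin: "finite {j. pivotal R M j \<and> j < k}" for k
    by (rule finite_subset[of _ "{..<k}"]) auto
  have "\<forall>l\<in>{..<i}. in_col_span R M {j. pivotal R M j \<and> j < i} l"
  proof
    fix l assume "l \<in> {..<i}"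
    then have "l < i" by simp
    show "in_col_span R M {j. pivotal R M j \<and> j < i} l"
    proof (cases "pivotal R M l")
      case True
      then show ?thesis using \<open>l < i\<close> by (intro in_col_span_column[OF fin]) simp
    next
      case False
      have "\<forall>k\<in>{j. pivotal R M j \<and> j < l}. in_col_span R M {j. pivotal R M j \<and> j < i} k"
        using \<open>l < i\<close> by (auto intro!: in_col_span_column[OF fin])
      moreover have "in_col_span R M {j. pivotal R M j \<and> j < l} l"
        using less.IH[OF \<open>l < i\<close> False] .
      ultimately show ?thesis by (rule in_col_span_trans[OF fin])
    qed
  qed
  moreover have "in_col_span R M {..<i} i"
    using less.prems unfolding pivotal_def by simp
  ultimately show ?case by (rule in_col_span_trans[OF finite_lessThan])
qed

lemma pivotal_columns_independent:
  assumes "finite S" and piv: "\<forall>j\<in>S. pivotal R M j"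
    and zero: "\<forall>m<R. (\<Sum>j\<in>S. \<gamma> j * M m j) = 0"
  shows "\<forall>j\<in>S. \<gamma> j = 0"
proof (rule ccontr)
  assume "\<not> (\<forall>j\<in>S. \<gamma> j = 0)"
  define S' where "S' = {j\<in>S. \<gamma> j \<noteq> 0}"
  have "finite S'" "S' \<noteq> {}"
    using \<open>finite S\<close> \<open>\<not> (\<forall>j\<in>S. \<gamma> j = 0)\<close> unfolding S'_def by auto
  define J where "J = Max S'"
  have J: "J \<in> S'" "\<forall>j\<in>S'. j \<le> J"
    using \<open>finite S'\<close> \<open>S' \<noteq> {}\<close> unfolding J_def by auto
  then have "\<gamma> J \<noteq> 0" unfolding S'_def by simp
  have "\<forall>l\<in>S' - {J}. in_col_span R M {..<J} l"
    using J by (auto intro!: in_col_span_column simp: order.not_eq_order_implies_strict)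
  moreover have "in_col_span R M (S' - {J}) J"
    unfolding in_col_span_def
  proof (intro exI[of _ "\<lambda>l. - \<gamma> l / \<gamma> J"] allI impI)
    fix m assume "m < R"
    have "(\<Sum>j\<in>S. \<gamma> j * M m j) = (\<Sum>j\<in>S'. \<gamma> j * M m j)"
      unfolding S'_def using \<open>finite S\<close> by (intro sum.mono_neutral_right) auto
    also have "\<dots> = \<gamma> J * M m J + (\<Sum>j\<in>S' - {J}. \<gamma> j * M m j)"
      using J \<open>finite S'\<close> by (simp add: sum.remove)
    finally have "\<gamma> J * M m J = - (\<Sum>j\<in>S' - {J}. \<gamma> j * M m j)"
      using zero \<open>m < R\<close> by (simp add: eq_neg_iff_add_eq_0 add.commute)
    with \<open>\<gamma> J \<noteq> 0\<close> have "M m J = - (\<Sum>j\<in>S' - {J}. \<gamma> j * M m j) / \<gamma> J"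
      by (simp add: field_simps)
    also have "\<dots> = (\<Sum>l\<in>S' - {J}. - \<gamma> l / \<gamma> J * M m l)"
      by (simp add: sum_divide_distrib flip: sum_negf)
    finally show "M m J = (\<Sum>l\<in>S' - {J}. - \<gamma> l / \<gamma> J * M m l)" .
  qed
  ultimately have "in_col_span R M {..<J} J"
    using \<open>finite S'\<close> by (blast intro: in_col_span_trans[of "S' - {J}"])
  then show False
    using J piv unfolding S'_def pivotal_def by simp
qed

lemma nonpivotal_column_eq_alpha_sum:
  assumes "i \<in> nonpiv_set R N M"
  shows "\<forall>m<R. M m i =
    (\<Sum>j\<in>{j\<in>piv_set R N M. j < i}. alpha R M (piv_set R N M) i j * M m j)"
proof -
  define P where "P = {j\<in>piv_set R N M. j < i}"
  have P: "P = {j. pivotal R M j \<and> j < i}"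
    using assms unfolding P_def piv_set_def nonpiv_set_def by auto
  have "finite P"
    unfolding P_def by (rule finite_subset[of _ "{..<i}"]) auto
  obtain \<beta> where \<beta>: "\<forall>m<R. M m i = (\<Sum>j\<in>P. \<beta> j * M m j)"
    using nonpivotal_in_col_span_pivotal assms unfolding P in_col_span_def nonpiv_set_def by blast
  define \<beta>' where "\<beta>' j = (if j \<in> P then \<beta> j else 0)" for j
  have \<beta>': "\<forall>m<R. M m i = (\<Sum>j\<in>P. \<beta>' j * M m j)"
    using \<beta> unfolding \<beta>'_def by simp
  have "alpha R M (piv_set R N M) i = \<beta>'"
    unfolding alpha_def P_def[symmetric]
  proof (rule the_equality)
    show "(\<forall>m<R. M m i = (\<Sum>j\<in>P. \<beta>' j * M m j)) \<and> (\<forall>j. j \<notin> P \<longrightarrow> \<beta>' j = 0)"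
      using \<beta>' unfolding \<beta>'_def by simp
  next
    fix \<gamma> assume \<gamma>: "(\<forall>m<R. M m i = (\<Sum>j\<in>P. \<gamma> j * M m j)) \<and> (\<forall>j. j \<notin> P \<longrightarrow> \<gamma> j = 0)"
    have "\<forall>m<R. (\<Sum>j\<in>P. (\<gamma> j - \<beta>' j) * M m j) = 0"
      using \<gamma> \<beta>' by (simp add: left_diff_distrib sum_subtractf)
    then have "\<forall>j\<in>P. \<gamma> j - \<beta>' j = 0"
      by (rule pivotal_columns_independent[OF \<open>finite P\<close>, rotated]) (simp add: P)
    with \<gamma> show "\<gamma> = \<beta>'"
      unfolding \<beta>'_def by fastforce
  qed
  with \<beta>' show ?thesis
    unfolding P_def by simp
qed

lemma bvec_eq:
  "bvec R M p i c = of_bool (c = i) - (if c \<in> {j\<in>p. j < i} then alpha R M p i c else 0)"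
proof -
  have "finite {j\<in>p. j < i}"
    by (rule finite_subset[of _ "{..<i}"]) auto
  then show ?thesis
    unfolding bvec_def by (simp add: if_distrib[of "\<lambda>x. _ * x"] sum.delta' cong: if_cong)
qed

lemma bvec_in_kernel:
  assumes "i \<in> nonpiv_set R N M"
  shows "\<forall>m<R. (\<Sum>c<N. M m c * bvec R M (piv_set R N M) i c) = 0"
proof (intro allI impI)
  fix m assume "m < R"
  define P where "P = {j\<in>piv_set R N M. j < i}"
  have "P \<subseteq> {..<N}" "i < N"
    using assms unfolding P_def piv_set_def nonpiv_set_def by auto
  then have "(\<Sum>c<N. M m c * bvec R M (piv_set R N M) i c)
      = M m i - (\<Sum>j\<in>P. alpha R M (piv_set R N M) i j * M m j)"
    unfolding bvec_eq P_def[symmetric]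
    by (simp add: right_diff_distrib sum_subtractf if_distrib[of "\<lambda>x. _ * x"] mult.commute
        Int_absorb1 cong: if_cong flip: sum.inter_restrict)
  also have "\<dots> = 0"
    using nonpivotal_column_eq_alpha_sum[OF assms] \<open>m < R\<close> unfolding P_def by simp
  finally show "(\<Sum>c<N. M m c * bvec R M (piv_set R N M) i c) = 0" .
qed

lemma bvec_diag: "i \<notin> p \<Longrightarrow> bvec R M p i i = 1"
  unfolding bvec_def by simp

lemma bvec_above: "i < c \<Longrightarrow> bvec R M p i c = 0"
  unfolding bvec_def by simp

lemma last_nonzero_of_kernel_vector_nonpivotal:
  assumes "B < N" and above: "\<forall>c>B. v c = 0" and "v B \<noteq> 0"
    and kernel: "\<forall>m<R. (\<Sum>c<N. M m c * v c) = 0"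
  shows "B \<in> nonpiv_set R N M"
proof -
  have "in_col_span R M {..<B} B"
    unfolding in_col_span_def
  proof (intro exI[of _ "\<lambda>c. - v c / v B"] allI impI)
    fix m assume "m < R"
    have "(\<Sum>c<N. M m c * v c) = (\<Sum>c<Suc B. M m c * v c)"
      using \<open>B < N\<close> above by (intro sum.mono_neutral_right) auto
    with kernel \<open>m < R\<close> have "M m B * v B = - (\<Sum>c<B. M m c * v c)"
      by (simp add: eq_neg_iff_add_eq_0 add.commute)
    with \<open>v B \<noteq> 0\<close> have "M m B = - (\<Sum>c<B. M m c * v c) / v B"
      by (simp add: field_simps)
    also have "\<dots> = (\<Sum>c<B. - v c / v B * M m c)"
      by (simp add: sum_divide_distrib mult.commute flip: sum_negf)
    finally show "M m B = (\<Sum>c<B. - v c / v B * M m c)" .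
  qed
  with \<open>B < N\<close> show ?thesis
    unfolding nonpiv_set_def pivotal_def by simp
qed

lemma basic_nonpiv_class_min:
  assumes "finite q" "i \<in> q"
  shows "Min {j\<in>q. j mod n = i mod n} \<in> q" "Min {j\<in>q. j mod n = i mod n} \<le> i"
    "Min {j\<in>q. j mod n = i mod n} mod n = i mod n"
proof -
  have "finite {j\<in>q. j mod n = i mod n}" "i \<in> {j\<in>q. j mod n = i mod n}"
    using assms by auto
  then show "Min {j\<in>q. j mod n = i mod n} \<in> q" "Min {j\<in>q. j mod n = i mod n} \<le> i"
    "Min {j\<in>q. j mod n = i mod n} mod n = i mod n"
    using Min_in[of "{j\<in>q. j mod n = i mod n}"] Min_le by blast+
qed

lemma basic_nonpiv_subset: "finite q \<Longrightarrow> basic_nonpiv n q \<subseteq> q"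
  unfolding basic_nonpiv_def using basic_nonpiv_class_min(1) by blast

lemma finite_basic_nonpiv: "finite q \<Longrightarrow> finite (basic_nonpiv n q)"
  unfolding basic_nonpiv_def by simp

lemma basic_nonpiv_below:
  assumes "finite q" "i \<in> q"
  obtains r where "r \<in> basic_nonpiv n q" "r \<le> i" "r mod n = i mod n"
  using basic_nonpiv_class_min[OF assms] assms(2) unfolding basic_nonpiv_def by blast

text \<open>The inverse of \<^const>\<open>flat\<close>: entry \<open>k * n + r\<close> is the coefficient of \<open>s\<^sup>k\<close> in \<open>h r\<close>.\<close>

definition coeff_vec :: "nat \<Rightarrow> (nat \<Rightarrow> 'a::zero poly) \<Rightarrow> nat \<Rightarrow> 'a" where
  "coeff_vec n h c = coeff (h (c mod n)) (c div n)"

lemma coeff_flat: "r < n \<Longrightarrow> coeff (flat n d u r) k = (if k \<le> d then u (k * n + r) else 0)"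
  unfolding flat_def by (simp add: coeff_sum coeff_monom)

lemma coeff_vec_block: "r < n \<Longrightarrow> coeff_vec n h (k * n + r) = coeff (h r) k"
  unfolding coeff_vec_def by simp

lemma coeff_vec_vanishing_iff_degree_le:
  assumes "n > 0"
  shows "(\<forall>c\<ge>n * (d + 1). coeff_vec n h c = 0) \<longleftrightarrow> (\<forall>r<n. degree (h r) \<le> d)"
proof
  assume vanish: "\<forall>c\<ge>n * (d + 1). coeff_vec n h c = 0"
  show "\<forall>r<n. degree (h r) \<le> d"
  proof (intro allI impI degree_le)
    fix r k assume "r < n" "d < k"
    have "(d + 1) * n \<le> k * n"
      using \<open>d < k\<close> by (intro mult_le_mono1) simp
    then have "n * (d + 1) \<le> k * n + r"
      by (simp add: mult.commute)
    with vanish \<open>r < n\<close> show "coeff (h r) k = 0"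
      by (metis coeff_vec_block)
  qed
next
  assume deg: "\<forall>r<n. degree (h r) \<le> d"
  show "\<forall>c\<ge>n * (d + 1). coeff_vec n h c = 0"
  proof (intro allI impI)
    fix c assume "n * (d + 1) \<le> c"
    with assms have "d + 1 \<le> c div n"
      by (simp add: less_eq_div_iff_mult_less_eq mult.commute)
    moreover have "c mod n < n"
      using assms by simp
    ultimately show "coeff_vec n h c = 0"
      using deg unfolding coeff_vec_def by (intro coeff_eq_0) fastforce
  qed
qed

lemma flat_coeff_vec:
  assumes "\<forall>r\<ge>n. h r = 0" "\<forall>r<n. degree (h r) \<le> d"
  shows "flat n d (coeff_vec n h) = h"
proof
  fix r
  show "flat n d (coeff_vec n h) r = h r"
  proof (cases "r < n")
    case True
    show ?thesis
    proof (rule poly_eqI)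
      fix k
      have "coeff (h r) k = 0" if "d < k"
        using True assms(2) that by (meson coeff_eq_0 le_less_trans)
      then show "coeff (flat n d (coeff_vec n h) r) k = coeff (h r) k"
        using True by (simp add: coeff_flat coeff_vec_block)
    qed
  qed (use assms in \<open>simp add: flat_def\<close>)
qed

lemma coeff_vec_monom_mult_flat:
  assumes "n > 0"
  shows "coeff_vec n (\<lambda>r. monom x t * flat n d u r) c =
    (if t * n \<le> c \<and> c div n \<le> t + d then x * u (c - t * n) else 0)"
proof (cases "t \<le> c div n")
  case True
  have "(c div n - t) * n = c div n * n - t * n"
    by (simp add: diff_mult_distrib)
  moreover have "t * n \<le> c div n * n"
    using True by simp
  ultimately have "(c div n - t) * n + c mod n = c - t * n"
    using div_mult_mod_eq[of c n] by linarith
  with True assms show ?thesis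
    unfolding coeff_vec_def
    by (simp add: coeff_monom_mult coeff_flat less_eq_div_iff_mult_less_eq[symmetric] le_diff_conv
        add.commute)
next
  case False
  with assms show ?thesis
    unfolding coeff_vec_def by (simp add: coeff_monom_mult less_eq_div_iff_mult_less_eq[symmetric])
qed

lemma sum_lessThan_mult_blocks:
  fixes D n :: nat
  shows "(\<Sum>c<D * n. f c) = (\<Sum>k<D. \<Sum>r<n. f (k * n + r))"
proof -
  have "(\<Sum>c<D * n. f c) = (\<Sum>k<D. \<Sum>c\<in>{k * n..<k * n + n}. f c)"
    by (rule sum.nat_group[symmetric])
  then show ?thesis
    by (simp add: sum.atLeastLessThan_shift_0[of _ "_ * n"] atLeast0LessThan comp_def)
qed

lemma coeff_sum_mult_flat:
  fixes a :: "nat \<Rightarrow> 'a::comm_semiring_1 poly"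
  assumes "n > 0" and deg: "\<forall>r<n. degree (a r) \<le> d"
  shows "coeff (\<Sum>r<n. a r * flat n d u r) m = (\<Sum>c<n * (d + 1). coeff_mat n d a m c * u c)"
proof -
  have mat: "coeff_mat n d a m (k * n + r) * u (k * n + r) =
      (if m < k then 0 else u (k * n + r) * coeff (a r) (m - k))" if "r < n" for k r
    using that deg assms(1) unfolding coeff_mat_def by (auto simp: coeff_eq_0 mult.commute)
  have "coeff (\<Sum>r<n. a r * flat n d u r) m =
      (\<Sum>r<n. \<Sum>k\<le>d. if m < k then 0 else u (k * n + r) * coeff (a r) (m - k))"
    unfolding flat_def by (simp add: coeff_sum sum_distrib_left coeff_monom_mult mult.commute[of "a _"])
  also have "\<dots> = (\<Sum>k<d + 1. \<Sum>r<n. coeff_mat n d a m (k * n + r) * u (k * n + r))"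
    by (subst sum.swap) (simp add: mat lessThan_Suc_atMost)
  also have "\<dots> = (\<Sum>c<n * (d + 1). coeff_mat n d a m c * u c)"
    by (simp only: sum_lessThan_mult_blocks mult.commute[of n "d + 1"])
  finally show ?thesis .
qed

lemma flat_in_syz_iff:
  fixes a :: "nat \<Rightarrow> 'a::comm_ring_1 poly"
  assumes "n > 0" and deg: "\<forall>r<n. degree (a r) \<le> d"
  shows "flat n d u \<in> syz n a \<longleftrightarrow> (\<forall>m<2 * d + 1. (\<Sum>c<n * (d + 1). coeff_mat n d a m c * u c) = 0)"
proof -
  have high: "coeff (\<Sum>r<n. a r * flat n d u r) m = 0" if "2 * d + 1 \<le> m" for m
  proof -
    have "degree (a r * flat n d u r) \<le> 2 * d" if "r < n" for r
    proof -
      have "degree (flat n d u r) \<le> d"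
        unfolding flat_def by (auto intro!: degree_sum_le simp: degree_monom_le order.trans[OF degree_monom_le])
      with deg[rule_format, OF that] show ?thesis
        using degree_mult_le[of "a r" "flat n d u r"] by linarith
    qed
    then have "degree (\<Sum>r<n. a r * flat n d u r) \<le> 2 * d"
      by (intro degree_sum_le) auto
    with that show ?thesis
      by (intro coeff_eq_0) linarith
  qed
  have "(\<Sum>r<n. a r * flat n d u r) = 0 \<longleftrightarrow>
      (\<forall>m<2 * d + 1. coeff (\<Sum>r<n. a r * flat n d u r) m = 0)"
  proof
    assume low: "\<forall>m<2 * d + 1. coeff (\<Sum>r<n. a r * flat n d u r) m = 0"
    show "(\<Sum>r<n. a r * flat n d u r) = 0"
    proof (rule poly_eqI)
      fix m
      show "coeff (\<Sum>r<n. a r * flat n d u r) m = coeff 0 m"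
        using low high[of m] by (cases "m < 2 * d + 1") auto
    qed
  qed simp
  moreover have "\<forall>r\<ge>n. flat n d u r = 0"
    by (simp add: flat_def)
  ultimately show ?thesis
    unfolding syz_def using coeff_sum_mult_flat[OF assms] by simp
qed

lemma poly_span_zero: "(\<lambda>r. 0) \<in> poly_span I g"
  unfolding poly_span_def by (intro CollectI exI[of _ "\<lambda>i. 0"]) simp

lemma poly_span_generator: "finite I \<Longrightarrow> i \<in> I \<Longrightarrow> g i \<in> poly_span I g"
  unfolding poly_span_def by (intro CollectI exI[of _ "\<lambda>j. of_bool (j = i)"]) auto

lemma poly_span_add:
  assumes "x \<in> poly_span I g" "y \<in> poly_span I g"
  shows "(\<lambda>r. x r + y r) \<in> poly_span I g"
proof -
  obtain f1 f2 where "x = (\<lambda>r. \<Sum>i\<in>I. f1 i * g i r)" "y = (\<lambda>r. \<Sum>i\<in>I. f2 i * g i r)"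
    using assms unfolding poly_span_def by blast
  then show ?thesis
    unfolding poly_span_def
    by (intro CollectI exI[of _ "\<lambda>i. f1 i + f2 i"]) (simp add: distrib_right sum.distrib)
qed

lemma poly_span_smult:
  assumes "x \<in> poly_span I g"
  shows "(\<lambda>r. c * x r) \<in> poly_span I g"
proof -
  obtain f where "x = (\<lambda>r. \<Sum>i\<in>I. f i * g i r)"
    using assms unfolding poly_span_def by blast
  then show ?thesis
    unfolding poly_span_def
    by (intro CollectI exI[of _ "\<lambda>i. c * f i"]) (simp add: sum_distrib_left mult.assoc)
qed

lemma poly_span_lincomb:
  assumes "\<forall>l\<in>L. x l \<in> poly_span I g"
  shows "(\<lambda>r. \<Sum>l\<in>L. c l * x l r) \<in> poly_span I g"
proof -
  obtain f where f: "\<forall>l\<in>L. x l = (\<lambda>r. \<Sum>i\<in>I. f l i * g i r)"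
    using assms unfolding poly_span_def mem_Collect_eq by (subst (asm) bchoice_iff) blast
  then have "(\<lambda>r. \<Sum>l\<in>L. c l * x l r) = (\<lambda>r. \<Sum>i\<in>I. (\<Sum>l\<in>L. c l * f l i) * g i r)"
    by (simp add: sum_distrib_left sum_distrib_right mult.assoc sum.swap[of _ L])
  then show ?thesis
    unfolding poly_span_def by (intro CollectI exI[of _ "\<lambda>i. \<Sum>l\<in>L. c l * f l i"])
qed

lemma syz_diff: "h \<in> syz n a \<Longrightarrow> k \<in> syz n a \<Longrightarrow> (\<lambda>r. h r - k r) \<in> syz n a"
  unfolding syz_def by (simp add: right_diff_distrib sum_subtractf)

lemma syz_smult: "k \<in> syz n a \<Longrightarrow> (\<lambda>r. c * k r) \<in> syz n a"
  unfolding syz_def by (simp add: mult.left_commute[of _ c] flip: sum_distrib_left)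

lemma syz_lincomb:
  assumes "\<forall>l\<in>L. k l \<in> syz n a"
  shows "(\<lambda>r. \<Sum>l\<in>L. c l * k l r) \<in> syz n a"
proof -
  have "(\<Sum>r<n. a r * (\<Sum>l\<in>L. c l * k l r)) = (\<Sum>l\<in>L. c l * (\<Sum>r<n. a r * k l r))"
    by (simp add: sum_distrib_left mult.left_commute sum.swap[of _ L])
  with assms show ?thesis
    unfolding syz_def by simp
qed

lemma poly_span_subset_syz: "\<forall>i\<in>I. g i \<in> syz n a \<Longrightarrow> poly_span I g \<subseteq> syz n a"
  unfolding poly_span_def using syz_lincomb[of I g] by blast

lemma syz_degree_le_at:
  fixes a h :: "nat \<Rightarrow> 'a::idom poly"
  assumes "h \<in> syz n a" "t < n" "a t \<noteq> 0" and deg_a: "\<forall>r<n. degree (a r) \<le> degree (a t)"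
    and deg_h: "\<forall>r. r \<noteq> t \<longrightarrow> degree (h r) \<le> d"
  shows "degree (h t) \<le> d"
proof (cases "h t = 0")
  case False
  have "a t * h t + (\<Sum>r\<in>{..<n} - {t}. a r * h r) = 0"
    using assms(1,2) unfolding syz_def by (simp add: sum.remove)
  then have "a t * h t = - (\<Sum>r\<in>{..<n} - {t}. a r * h r)"
    by (simp add: eq_neg_iff_add_eq_0)
  moreover have "degree (\<Sum>r\<in>{..<n} - {t}. a r * h r) \<le> degree (a t) + d"
  proof (rule degree_sum_le)
    fix r assume "r \<in> {..<n} - {t}"
    with deg_a deg_h show "degree (a r * h r) \<le> degree (a t) + d"
      using degree_mult_le[of "a r" "h r"] by fastforce
  qed simp
  ultimately show ?thesis
    using degree_mult_eq[OF \<open>a t \<noteq> 0\<close> False] by simp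
qed simp

lemma syz_in_poly_span_of_bounded_degree_syz:
  fixes a :: "nat \<Rightarrow> 'a::field poly"
  assumes t: "t < n" "a t \<noteq> 0"
    and deg: "\<forall>r<n. degree (a r) \<le> degree (a t)" "degree (a t) \<le> d"
    and bounded: "\<And>k. k \<in> syz n a \<Longrightarrow> \<forall>r. degree (k r) \<le> d \<Longrightarrow> k \<in> poly_span I g"
    and h: "h \<in> syz n a"
  shows "h \<in> poly_span I g"
proof -
  define \<kappa> where "\<kappa> i r = (if r = i then a t else 0) - (if r = t then a i else 0)" for i r
  have \<kappa>_syz: "\<kappa> i \<in> syz n a" if "i < n" for i
    unfolding syz_def \<kappa>_def using that t
    by (simp add: right_diff_distrib sum_subtractf if_distrib[of "\<lambda>x. a _ * x"] mult.commute
        cong: if_cong)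
  have \<kappa>_span: "\<kappa> i \<in> poly_span I g" if "i < n" for i
  proof (rule bounded[OF \<kappa>_syz[OF that]])
    show "\<forall>r. degree (\<kappa> i r) \<le> d"
      using deg that unfolding \<kappa>_def by (auto intro!: degree_diff_le)
  qed
  define h' where "h' = (\<lambda>r. h r - (\<Sum>i<n. (h i div a t) * \<kappa> i r))"
  have "h' \<in> syz n a"
    unfolding h'_def using \<kappa>_syz by (intro syz_diff[OF h] syz_lincomb) simp
  have "degree (h' r) \<le> d" if "r \<noteq> t" for r
  proof (cases "r < n")
    case True
    have "(\<Sum>i<n. (h i div a t) * \<kappa> i r) = (h r div a t) * a t"
      using True that unfolding \<kappa>_def by (simp add: if_distrib[of "\<lambda>x. _ * x"] cong: if_cong)
    then have "h' r = h r mod a t"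
      unfolding h'_def by (simp add: minus_div_mult_eq_mod)
    then show ?thesis
      using degree_mod_less[OF t(2), of "h r"] deg(2) by auto
  next
    case False
    then show ?thesis
      using \<open>h' \<in> syz n a\<close> unfolding syz_def by simp
  qed
  then have "degree (h' r) \<le> d" for r
    using syz_degree_le_at[OF \<open>h' \<in> syz n a\<close> t deg(1)] by (cases "r = t") auto
  then have "h' \<in> poly_span I g"
    using bounded[OF \<open>h' \<in> syz n a\<close>] by blast
  moreover have "(\<lambda>r. \<Sum>i<n. (h i div a t) * \<kappa> i r) \<in> poly_span I g"
    using \<kappa>_span by (intro poly_span_lincomb) simp
  ultimately have "(\<lambda>r. h' r + (\<Sum>i<n. (h i div a t) * \<kappa> i r)) \<in> poly_span I g"
    by (rule poly_span_add)
  then show ?thesis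
    unfolding h'_def by simp
qed

locale degree_bounded_row =
  fixes a :: "nat \<Rightarrow> 'a::field poly" and n d :: nat
  assumes n_pos: "n > 0" and deg_a: "\<forall>r<n. degree (a r) \<le> d"
begin

abbreviation "A \<equiv> coeff_mat n d a"
abbreviation "piv \<equiv> piv_set (2 * d + 1) (n * (d + 1)) A"
abbreviation "nonpiv \<equiv> nonpiv_set (2 * d + 1) (n * (d + 1)) A"
abbreviation "gen \<equiv> \<lambda>i. flat n d (bvec (2 * d + 1) A piv i)"

lemma gen_in_syz: "i \<in> nonpiv \<Longrightarrow> gen i \<in> syz n a"
  using flat_in_syz_iff[OF n_pos deg_a] bvec_in_kernel by blast

lemma finite_nonpiv: "finite nonpiv"
  unfolding nonpiv_set_def by simp

lemma coeff_vec_in_kernel: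
  assumes "h \<in> syz n a" "\<forall>r<n. degree (h r) \<le> d"
  shows "\<forall>m<2 * d + 1. (\<Sum>c<n * (d + 1). A m c * coeff_vec n h c) = 0"
proof -
  have "flat n d (coeff_vec n h) = h"
    using assms unfolding syz_def by (intro flat_coeff_vec) auto
  with assms(1) show ?thesis
    using flat_in_syz_iff[OF n_pos deg_a] by metis
qed

text \<open>\<open>s\<^sup>t b\<^sub>i\<^sup>\<flat>\<close> has coordinate \<open>1\<close> at \<open>i + t n\<close> and none beyond.\<close>

lemma coeff_vec_sub_shifted_gen:
  assumes "i \<in> nonpiv" "B = i + t * n" "\<forall>c>B. coeff_vec n h c = 0" "B \<le> c"
  shows "coeff_vec n (\<lambda>r. h r - monom (coeff_vec n h B) t * gen i r) c = 0"
proof -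
  have "i \<notin> piv" "i < (d + 1) * n"
    using assms(1) unfolding nonpiv_set_def piv_set_def by (auto simp: mult.commute)
  then have "i div n \<le> d"
    using div_less_iff_less_mult[OF n_pos, of i "d + 1"] by simp
  have "coeff_vec n (\<lambda>r. h r - monom (coeff_vec n h B) t * gen i r) c =
      coeff_vec n h c - coeff_vec n (\<lambda>r. monom (coeff_vec n h B) t * gen i r) c"
    unfolding coeff_vec_def by simp
  also have "\<dots> = 0"
  proof (cases "c = B")
    case True
    with assms(2) \<open>i div n \<le> d\<close> \<open>i \<notin> piv\<close> show ?thesis
      using n_pos by (simp add: coeff_vec_monom_mult_flat bvec_diag)
  next
    case False
    with assms(2-4) show ?thesis
      using n_pos by (simp add: coeff_vec_monom_mult_flat bvec_above)
  qed
  finally show ?thesis .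
qed

lemma leading_coeff_vec_cancel:
  assumes h: "h \<in> syz n a" and "B < n * (d + 1)"
    and above: "\<forall>c>B. coeff_vec n h c = 0" and "coeff_vec n h B \<noteq> 0"
  obtains i t where "i \<in> basic_nonpiv n nonpiv"
    "\<forall>c\<ge>B. coeff_vec n (\<lambda>r. h r - monom (coeff_vec n h B) t * gen i r) c = 0"
proof -
  have "\<forall>c\<ge>n * (d + 1). coeff_vec n h c = 0"
    using above \<open>B < n * (d + 1)\<close> by auto
  then have "\<forall>r<n. degree (h r) \<le> d"
    using coeff_vec_vanishing_iff_degree_le[OF n_pos] by blast
  with h have "\<forall>m<2 * d + 1. (\<Sum>c<n * (d + 1). A m c * coeff_vec n h c) = 0"
    by (rule coeff_vec_in_kernel)
  then have "B \<in> nonpiv"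
    using \<open>B < n * (d + 1)\<close> above \<open>coeff_vec n h B \<noteq> 0\<close>
    by (intro last_nonzero_of_kernel_vector_nonpivotal) auto
  then obtain i where i: "i \<in> basic_nonpiv n nonpiv" "i \<le> B" "i mod n = B mod n"
    using basic_nonpiv_below[OF finite_nonpiv] by blast
  moreover obtain t where "B = i + t * n"
  proof -
    have "n dvd B - i"
      using i mod_eq_dvd_iff_nat[of i B n] by simp
    then obtain t where "B - i = n * t"
      by (rule dvdE)
    with \<open>i \<le> B\<close> have "B = i + t * n"
      by (simp add: mult.commute)
    then show ?thesis
      by (rule that)
  qed
  moreover have "i \<in> nonpiv"
    using i basic_nonpiv_subset[OF finite_nonpiv] by blast
  ultimately show ?thesis
    using that above coeff_vec_sub_shifted_gen by blast
qed

lemma syz_in_poly_span_of_coeff_vec_vanishing: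
  "B \<le> n * (d + 1) \<Longrightarrow> h \<in> syz n a \<Longrightarrow> \<forall>c\<ge>B. coeff_vec n h c = 0 \<Longrightarrow>
    h \<in> poly_span (basic_nonpiv n nonpiv) gen"
proof (induction B arbitrary: h)
  case 0
  have "h = (\<lambda>r. 0)"
  proof
    fix r
    show "h r = 0"
    proof (cases "r < n")
      case True
      show ?thesis
      proof (rule poly_eqI)
        fix k
        show "coeff (h r) k = coeff 0 k"
          using "0.prems"(3) coeff_vec_block[OF True, of h k] by simp
      qed
    qed (use "0.prems"(2) in \<open>simp add: syz_def\<close>)
  qed
  then show ?case
    by (simp add: poly_span_zero)
next
  case (Suc B)
  show ?case
  proof (cases "coeff_vec n h B = 0")
    case True
    have "\<forall>c\<ge>B. coeff_vec n h c = 0"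
    proof (intro allI impI)
      fix c assume "B \<le> c"
      with Suc.prems(3) True show "coeff_vec n h c = 0"
        by (cases "c = B") auto
    qed
    with Suc.IH Suc.prems(1,2) show ?thesis
      by simp
  next
    case False
    from Suc.prems have "B < n * (d + 1)" "\<forall>c>B. coeff_vec n h c = 0"
      by auto
    with Suc.prems(2) obtain i t where i: "i \<in> basic_nonpiv n nonpiv"
      and vanish: "\<forall>c\<ge>B. coeff_vec n (\<lambda>r. h r - monom (coeff_vec n h B) t * gen i r) c = 0"
      using False by (rule leading_coeff_vec_cancel)
    have "gen i \<in> syz n a"
      using i basic_nonpiv_subset[OF finite_nonpiv] by (blast intro: gen_in_syz)
    then have "(\<lambda>r. h r - monom (coeff_vec n h B) t * gen i r) \<in> syz n a"
      by (intro syz_diff[OF Suc.prems(2)] syz_smult)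
    with Suc.IH Suc.prems(1) vanish
    have "(\<lambda>r. h r - monom (coeff_vec n h B) t * gen i r) \<in> poly_span (basic_nonpiv n nonpiv) gen"
      by simp
    moreover have "(\<lambda>r. monom (coeff_vec n h B) t * gen i r) \<in> poly_span (basic_nonpiv n nonpiv) gen"
      using finite_basic_nonpiv[OF finite_nonpiv] i
      by (intro poly_span_smult poly_span_generator)
    ultimately show ?thesis
      using poly_span_add by fastforce
  qed
qed

lemma bounded_syz_in_poly_span:
  assumes "h \<in> syz n a" "\<forall>r<n. degree (h r) \<le> d"
  shows "h \<in> poly_span (basic_nonpiv n nonpiv) gen"
  using assms coeff_vec_vanishing_iff_degree_le[OF n_pos]
  by (intro syz_in_poly_span_of_coeff_vec_vanishing[OF order.refl]) blast+

lemma syz_eq_poly_span_gen: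
  assumes "t < n" "a t \<noteq> 0" "degree (a t) = d"
  shows "syz n a = poly_span (basic_nonpiv n nonpiv) gen"
proof
  show "syz n a \<subseteq> poly_span (basic_nonpiv n nonpiv) gen"
    using assms deg_a bounded_syz_in_poly_span
    by (blast intro: syz_in_poly_span_of_bounded_degree_syz[of t])
  show "poly_span (basic_nonpiv n nonpiv) gen \<subseteq> syz n a"
    using basic_nonpiv_subset[OF finite_nonpiv] gen_in_syz by (intro poly_span_subset_syz) blast
qed

end

lemma degree_le_vdegree: "r < n \<Longrightarrow> degree (a r) \<le> vdegree n a"
  unfolding vdegree_def by (intro Max_ge) auto

lemma vdegree_attained:
  assumes "\<exists>r<n. a r \<noteq> 0"
  obtains t where "t < n" "a t \<noteq> 0" "degree (a t) = vdegree n a"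
proof (cases "vdegree n a = 0")
  case True
  from assms obtain r where "r < n" "a r \<noteq> 0"
    by blast
  with True show ?thesis
    using degree_le_vdegree[of r n a] that[of r] by simp
next
  case False
  have "vdegree n a \<in> (\<lambda>r. degree (a r)) ` {..<n}"
    using assms unfolding vdegree_def by (intro Max_in) auto
  then obtain t where "t < n" "degree (a t) = vdegree n a"
    by auto
  with False show ?thesis
    using that[of t] by (cases "a t = 0") auto
qed

theorem lemma9:
  fixes a :: "nat \<Rightarrow> 'a::field poly" and n d :: nat
  assumes "n > 1"
    and "\<forall>r\<ge>n. a r = 0"
    and "\<exists>r<n. a r \<noteq> 0"
    and "d = vdegree n a"
  shows "syz n a =
    poly_span
      (basic_nonpiv n (nonpiv_set (2*d+1) (n*(d+1)) (coeff_mat n d a)))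
      (\<lambda>i. flat n d (bvec (2*d+1) (coeff_mat n d a)
                       (piv_set (2*d+1) (n*(d+1)) (coeff_mat n d a)) i))"
proof -
  have "n > 0"
    using assms(1) by simp
  moreover have "\<forall>r<n. degree (a r) \<le> d"
    using degree_le_vdegree assms(4) by blast
  ultimately interpret degree_bounded_row a n d
    by unfold_locales
  obtain t where "t < n" "a t \<noteq> 0" "degree (a t) = d"
    using vdegree_attained[OF assms(3)] assms(4) by blast
  then show ?thesis
    by (rule syz_eq_poly_span_gen)
qed

end
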